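(* Let $U\subset\mathbb{C}\setminus\{0\}$ be a connected domain and let $f_1,f_2$ be complex-differentiable and nowhere vanishing on $U$ such that $\mathcal{A}[f_1]=f_2$ and $\mathcal{A}[f_2]=f_1$ on $U$. Then $f_2-f_1$ is constant on $U$.
   Context: For a complex-differentiable, nowhere-vanishing function $f$ on a domain $U\subset\mathbb{C}\setminus\{0\}$, the dual logarithmic derivative operator is $\mathcal{A}[f](x)=\dfrac{x f'(x)}{f(x)}$ (equivalently $\mathrm{d}\ln f/\mathrm{d}\ln x$ for fixed analytic branches of the logarithms). *)

theory Defs
  imports "HOL-Complex_Analysis.Complex_Analysis"
begin

definition dual_logderiv :: "(complex \<Rightarrow> complex) \<Rightarrow> complex \<Rightarrow> complex" where
  "dual_logderiv f x = x * deriv f x / f x"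

end

theory Submission
  imports Defs
begin

text \<open>Clearing denominators, both hypotheses say \<open>x f\<^sub>1'(x) = f\<^sub>1(x) f\<^sub>2(x) = x f\<^sub>2'(x)\<close>;
  since \<open>x \<noteq> 0\<close> the two functions have the same derivative, so their difference is
  constant on the connected domain.\<close>

lemma deriv_eq_if_dual_logderiv_swap:
  assumes "x \<noteq> 0" and "f x \<noteq> 0" and "g x \<noteq> 0"
    and "dual_logderiv f x = g x" and "dual_logderiv g x = f x"
  shows "deriv f x = deriv g x"
proof -
  have "x * deriv f x = g x * f x"
    using assms(2,4) by (auto simp: dual_logderiv_def field_simps)
  also have "\<dots> = x * deriv g x"
    using assms(3,5) by (auto simp: dual_logderiv_def field_simps)
  finally show ?thesis
    using \<open>x \<noteq> 0\<close> by simp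
qed

lemma holomorphic_diff_constant_if_deriv_eq:
  assumes "open U" and "connected U"
    and "f holomorphic_on U" and "g holomorphic_on U"
    and "\<And>x. x \<in> U \<Longrightarrow> deriv f x = deriv g x"
  obtains c where "\<And>x. x \<in> U \<Longrightarrow> f x - g x = c"
proof (rule DERIV_zero_connected_constant[OF \<open>connected U\<close> \<open>open U\<close> finite.emptyI])
  show "continuous_on U (\<lambda>x. f x - g x)"
    using assms(3,4) by (intro continuous_intros holomorphic_on_imp_continuous_on)
  show "\<forall>x\<in>U - {}. ((\<lambda>x. f x - g x) has_field_derivative 0) (at x)"
  proof
    fix x assume "x \<in> U - {}"
    then have "(f has_field_derivative deriv f x) (at x)"
      and "(g has_field_derivative deriv g x) (at x)"
      using assms(1,3,4) holomorphic_derivI by auto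
    then show "((\<lambda>x. f x - g x) has_field_derivative 0) (at x)"
      using assms(5) \<open>x \<in> U - {}\<close> by (auto intro: derivative_eq_intros)
  qed
qed blast

theorem lemma4p1:
  fixes U :: "complex set" and f1 f2 :: "complex \<Rightarrow> complex"
  assumes "open U" and "connected U" and "0 \<notin> U"
    and "f1 holomorphic_on U" and "f2 holomorphic_on U"
    and "\<And>x. x \<in> U \<Longrightarrow> f1 x \<noteq> 0"
    and "\<And>x. x \<in> U \<Longrightarrow> f2 x \<noteq> 0"
    and "\<And>x. x \<in> U \<Longrightarrow> dual_logderiv f1 x = f2 x"
    and "\<And>x. x \<in> U \<Longrightarrow> dual_logderiv f2 x = f1 x"
  shows "\<exists>c. \<forall>x\<in>U. f2 x - f1 x = c"
proof -
  have "deriv f2 x = deriv f1 x" if "x \<in> U" for x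
  proof (rule deriv_eq_if_dual_logderiv_swap)
    show "x \<noteq> 0"
      using \<open>x \<in> U\<close> \<open>0 \<notin> U\<close> by auto
  qed (use \<open>x \<in> U\<close> assms(6-9) in auto)
  then obtain c where "\<And>x. x \<in> U \<Longrightarrow> f2 x - f1 x = c"
    using holomorphic_diff_constant_if_deriv_eq[OF assms(1,2,5,4)] by blast
  then show ?thesis
    by blast
qed

end
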